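(* Let $n\ge1$, let $\check{\mathbf{F}}\in\mathbb{C}^{n\times n}$ have entries $(\check{\mathbf{F}})_{j,k}=\frac{1}{\sqrt n}\left(\cos\frac{2jk\pi}{n}+i\sin\frac{2jk\pi}{n}\right)$ for $j,k=0,\dots,n-1$, and let $\mathbf{C}:=\operatorname{Diag}(\{\cos\frac{k\pi}{n}\}_{k=0}^{n-1})$, $\mathbf{S}:=\operatorname{Diag}(\{\sin\frac{k\pi}{n}\}_{k=0}^{n-1})$. Then $\mathbf{C}\check{\mathbf{F}}^2\mathbf{S}+\mathbf{S}\check{\mathbf{F}}^2\mathbf{C}=\mathbf{0}$.
   Context: $i$ is the imaginary unit; $\operatorname{Diag}(\{d_k\})$ is the diagonal matrix with diagonal entries $d_0,\dots,d_{n-1}$. *)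

theory Defs
  imports Complex_Main
begin

text \<open>n x n complex matrices are represented as functions nat => nat => complex,
  with indices j,k ranging over {0..<n}. Entries outside this range are irrelevant.\<close>

definition mmult :: "nat \<Rightarrow> (nat \<Rightarrow> nat \<Rightarrow> complex) \<Rightarrow> (nat \<Rightarrow> nat \<Rightarrow> complex) \<Rightarrow> (nat \<Rightarrow> nat \<Rightarrow> complex)" where
  "mmult n A B = (\<lambda>j k. \<Sum>l<n. A j l * B l k)"

definition diag_mat :: "(nat \<Rightarrow> complex) \<Rightarrow> (nat \<Rightarrow> nat \<Rightarrow> complex)" where
  "diag_mat d = (\<lambda>j k. if j = k then d j else 0)"

definition Fcheck :: "nat \<Rightarrow> (nat \<Rightarrow> nat \<Rightarrow> complex)" where
  "Fcheck n = (\<lambda>j k. complex_of_real (1 / sqrt (real n)) *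
      (complex_of_real (cos (2 * real j * real k * pi / real n))
       + \<i> * complex_of_real (sin (2 * real j * real k * pi / real n))))"

definition Cmat :: "nat \<Rightarrow> (nat \<Rightarrow> nat \<Rightarrow> complex)" where
  "Cmat n = diag_mat (\<lambda>k. complex_of_real (cos (real k * pi / real n)))"

definition Smat :: "nat \<Rightarrow> (nat \<Rightarrow> nat \<Rightarrow> complex)" where
  "Smat n = diag_mat (\<lambda>k. complex_of_real (sin (real k * pi / real n)))"

end

theory Submission
  imports Defs
begin

text \<open>Diagonal matrices act entrywise, so with a_j = j \<pi> / n the (j, k) entry of
  C F^2 S + S F^2 C is (F^2)_jk (cos a_j sin a_k + sin a_j cos a_k) = (F^2)_jk sin ((j + k) \<pi> / n).
  By orthogonality of the roots of unity, F^2 is the index-reversal permutation: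
  (F^2)_jk vanishes unless n divides j + k, and then sin ((j + k) \<pi> / n) = 0.\<close>

lemma mmult_diag_mat_left:
  assumes "j < n"
  shows "mmult n (diag_mat a) M j k = a j * M j k"
  using assms by (simp add: mmult_def diag_mat_def if_distrib if_distribR sum.delta cong: if_cong)

lemma mmult_diag_mat_right:
  assumes "k < n"
  shows "mmult n M (diag_mat b) j k = M j k * b k"
  using assms by (simp add: mmult_def diag_mat_def if_distrib cong: if_cong)

lemma sum_cis_roots_of_unity:
  fixes m n :: nat
  assumes "n > 0"
  shows "(\<Sum>l<n. cis (2 * pi * real m * real l / real n)) = (if n dvd m then of_nat n else 0)"
proof -
  define z where "z = cis (2 * pi * real m / real n)"
  have powers: "cis (2 * pi * real m * real l / real n) = z ^ l" for l
    by (simp add: z_def DeMoivre mult_ac)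
  show ?thesis
  proof (cases "n dvd m")
    case True
    then obtain q where "m = n * q" by blast
    then have "2 * pi * real m / real n = 2 * pi * real q"
      using assms by simp
    then have "z = 1"
      by (simp add: z_def)
    then show ?thesis
      using True by (simp add: powers)
  next
    case False
    have "z ^ n = 1"
      using assms by (simp add: z_def DeMoivre)
    moreover have "z \<noteq> 1"
    proof
      assume "z = 1"
      then have "cos (2 * pi * real m / real n) = 1"
        by (simp add: z_def complex_eq_iff)
      then obtain i :: int where "2 * pi * real m / real n = real_of_int (i * 2) * pi"
        by (auto simp: cos_one_2pi_int)
      then have "real m = real_of_int i * real n"
        using assms by (simp add: field_simps)
      then have "int m = i * int n"
        by (metis of_int_eq_iff of_int_mult of_int_of_nat_eq)
      then show False
        using False by (metis dvd_triv_right int_dvd_int_iff mult.commute)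
    qed
    ultimately show ?thesis
      using False by (simp add: powers geometric_sum)
  qed
qed

lemma Fcheck_eq_cis:
  "Fcheck n j k = complex_of_real (1 / sqrt (real n)) * cis (2 * pi * real j * real k / real n)"
  by (simp add: Fcheck_def complex_eq_iff mult_ac)

lemma Fcheck_square:
  assumes "n > 0"
  shows "mmult n (Fcheck n) (Fcheck n) j k = (if n dvd j + k then 1 else 0)"
proof -
  have "Fcheck n j l * Fcheck n l k
      = complex_of_real (1 / real n) * cis (2 * pi * real (j + k) * real l / real n)" for l
  proof -
    have "complex_of_real (1 / sqrt (real n)) * complex_of_real (1 / sqrt (real n))
        = complex_of_real (1 / real n)"
      using assms by (simp flip: of_real_mult)
    then show ?thesis
      by (simp add: Fcheck_eq_cis mult_ac cis_mult add_divide_distrib distrib_left distrib_right)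
  qed
  then have "mmult n (Fcheck n) (Fcheck n) j k
      = complex_of_real (1 / real n) * (\<Sum>l<n. cis (2 * pi * real (j + k) * real l / real n))"
    by (simp add: mmult_def sum_distrib_left)
  then show ?thesis
    using assms by (simp only: sum_cis_roots_of_unity) simp
qed

theorem mainTheorem7:
  fixes n :: nat
  assumes "n \<ge> 1"
  shows "\<forall>j<n. \<forall>k<n.
    mmult n (mmult n (Cmat n) (mmult n (Fcheck n) (Fcheck n))) (Smat n) j k
  + mmult n (mmult n (Smat n) (mmult n (Fcheck n) (Fcheck n))) (Cmat n) j k = 0"
proof (intro allI impI)
  fix j k assume "j < n" "k < n"
  let ?F2 = "mmult n (Fcheck n) (Fcheck n)"
  have "mmult n (mmult n (Cmat n) ?F2) (Smat n) j k + mmult n (mmult n (Smat n) ?F2) (Cmat n) j k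
      = ?F2 j k * complex_of_real (sin (real j * pi / real n + real k * pi / real n))"
    using \<open>j < n\<close> \<open>k < n\<close>
    by (simp add: Cmat_def Smat_def mmult_diag_mat_left mmult_diag_mat_right sin_add algebra_simps)
  also have "\<dots> = 0"
  proof (cases "n dvd j + k")
    case True
    then obtain q where "j + k = n * q" by blast
    then have "real j + real k = real n * real q"
      by (metis of_nat_add of_nat_mult)
    then have "real j * pi / real n + real k * pi / real n = real q * pi"
      using assms by (simp flip: add_divide_distrib distrib_right)
    then show ?thesis by simp
  next
    case False
    then show ?thesis
      using assms by (simp add: Fcheck_square)
  qed
  finally show "mmult n (mmult n (Cmat n) ?F2) (Smat n) j k
      + mmult n (mmult n (Smat n) ?F2) (Cmat n) j k = 0" .
qed

end
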